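(* Let $n\ge1$, $\varepsilon\in D$ and $s\in D^n$, and let $\mu^{(0)},\dots,\mu^{(n)}$, $\Delta_j$, $e_j$, $j'$ be given by the recursive construction below. Then $\mu^{(n)}\in\mathrm{Min}(s)$ (so $\deg\mu^{(j)}=L_j$ for all $0\le j\le n$). Moreover: if $\Delta_n=0$ then $L_n=L_{n-1}$ and $e_n=e_{n-1}+1$; if $\Delta_n\neq0$ then (i) $L_n=\deg\mu^{(n)}=\max\{e_{n-1},0\}+L_{n-1}=n'+1-L_{n'}$, and (ii) $e_n=-|e_{n-1}|+1$.
   Context: Let $D$ be a commutative integral domain with $1\neq 0$. For $s=(s_1,\dots,s_n)\in D^n$ put $\underline{s}=s_1x^{-1}+\cdots+s_nx^{-n}\in D[x,x^{-1}]$; for a Laurent polynomial $F$, $F_k$ is the coefficient of $x^k$; $s^{(i)}=(s_1,\dots,s_i)$. A polynomial $f\in D[x]$ is an annihilator of $s$, $f\in\mathrm{Ann}(s)$, if $f=0$, or $d=\deg f\ge0$ and $(f\cdot\underline{s})_{d-j}=0$ for $d+1\le j\le n$. $\mathrm{Min}(s)$ is the set of nonzero annihilators of least degree; $L(s)$ is that degree, $L_j=L(s^{(j)})$, $L_0=0$. For nonzero $f\in D[x]$ and $t\in D^m$, $\Delta(f,t)=(f\cdot\underline{t})_{\deg f-m}$. Recursive construction (relative to a fixed $\varepsilon\in D$): put $\mu^{(-1)}=\varepsilon$, $\mu^{(0)}=1$, $\Delta_0=1$, $0'=-1$, and for $j\ge 0$ let $e_j=j+1-2\deg\mu^{(j)}$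 (so $e_0=1$). For $j=1,\dots,n$ successively define: $\Delta_j=\Delta(\mu^{(j-1)},s^{(j)})$; the index $j'=(j-1)'$ if $\Delta_j=0$ or $e_{j-1}\le 0$, and $j'=j-1$ if $\Delta_j\neq0$ and $e_{j-1}>0$; $\Delta'_j=\Delta_{(j-1)'+1}$; and $\mu^{(j)}=\mu^{(j-1)}$ if $\Delta_j=0$, otherwise $\mu^{(j)}=\Delta'_j\,x^{\max\{e_{j-1},0\}}\mu^{(j-1)}-\Delta_j\,x^{\max\{-e_{j-1},0\}}\mu^{((j-1)')}$. *)

theory Defs
  imports "HOL-Computational_Algebra.Polynomial"
begin

text \<open>A sequence s in D^n is a function s :: nat => 'a of which only s 1, ..., s n matter;
  the prefix s^(i) is the same function considered with length i.\<close>

text \<open>Coefficient of x^k in the Laurent polynomial f * (s_1 x^-1 + ... + s_n x^-n).\<close>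
definition lcoeff :: "'a::comm_ring_1 poly \<Rightarrow> (nat \<Rightarrow> 'a) \<Rightarrow> nat \<Rightarrow> int \<Rightarrow> 'a" where
  "lcoeff f s n k =
     (\<Sum>i\<in>{1..n}. (if 0 \<le> k + int i then coeff f (nat (k + int i)) else 0) * s i)"

definition is_ann :: "'a::comm_ring_1 poly \<Rightarrow> (nat \<Rightarrow> 'a) \<Rightarrow> nat \<Rightarrow> bool" where
  "is_ann f s n \<longleftrightarrow> f = 0 \<or>
     (\<forall>j. degree f + 1 \<le> j \<and> j \<le> n \<longrightarrow> lcoeff f s n (int (degree f) - int j) = 0)"

definition Min_set :: "(nat \<Rightarrow> 'a::comm_ring_1) \<Rightarrow> nat \<Rightarrow> 'a poly set" where
  "Min_set s n = {f. f \<noteq> 0 \<and> is_ann f s n \<and>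
      (\<forall>g. g \<noteq> 0 \<and> is_ann g s n \<longrightarrow> degree f \<le> degree g)}"

definition L :: "(nat \<Rightarrow> 'a::comm_ring_1) \<Rightarrow> nat \<Rightarrow> nat" where
  "L s n = (LEAST d. \<exists>f. f \<noteq> 0 \<and> is_ann f s n \<and> degree f = d)"

text \<open>Delta(f, t) for t = s^(m).\<close>
definition Delta :: "'a::comm_ring_1 poly \<Rightarrow> (nat \<Rightarrow> 'a) \<Rightarrow> nat \<Rightarrow> 'a" where
  "Delta f s m = lcoeff f s m (int (degree f) - int m)"

text \<open>State after step j: the lists [mu^(0),...,mu^(j)], [0',...,j'], [Delta_0,...,Delta_j].\<close>
primrec bm :: "'a::comm_ring_1 \<Rightarrow> (nat \<Rightarrow> 'a) \<Rightarrow> nat \<Rightarrow> 'a poly list \<times> int list \<times> 'a list" where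
  "bm \<epsilon> s 0 = ([1], [-1], [1])"
| "bm \<epsilon> s (Suc j) =
     (let (mus, jps, Ds) = bm \<epsilon> s j;
          m = mus ! j;
          Dn = Delta m s (Suc j);
          e = int j + 1 - 2 * int (degree m);
          jp = jps ! j;
          jpn = (if Dn = 0 \<or> e \<le> 0 then jp else int j);
          Dp = Ds ! nat (jp + 1);
          mp = (if jp = -1 then [:\<epsilon>:] else mus ! nat jp);
          mnew = (if Dn = 0 then m
                  else smult Dp (monom 1 (nat (max e 0)) * m)
                       - smult Dn (monom 1 (nat (max (- e) 0)) * mp))
      in (mus @ [mnew], jps @ [jpn], Ds @ [Dn]))"

definition mu :: "'a::comm_ring_1 \<Rightarrow> (nat \<Rightarrow> 'a) \<Rightarrow> nat \<Rightarrow> 'a poly" where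
  "mu \<epsilon> s j = fst (bm \<epsilon> s j) ! j"

definition jprime :: "'a::comm_ring_1 \<Rightarrow> (nat \<Rightarrow> 'a) \<Rightarrow> nat \<Rightarrow> int" where
  "jprime \<epsilon> s j = fst (snd (bm \<epsilon> s j)) ! j"

definition Dlt :: "'a::comm_ring_1 \<Rightarrow> (nat \<Rightarrow> 'a) \<Rightarrow> nat \<Rightarrow> 'a" where
  "Dlt \<epsilon> s j = snd (snd (bm \<epsilon> s j)) ! j"

definition ee :: "'a::comm_ring_1 \<Rightarrow> (nat \<Rightarrow> 'a) \<Rightarrow> nat \<Rightarrow> int" where
  "ee \<epsilon> s j = int j + 1 - 2 * int (degree (mu \<epsilon> s j))"

end

theory Submission
  imports Defs
begin

(* All annihilator conditions are rewritten in terms of the discrepancy window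
   disc f s d k = sum_{t<=d} f_t s_(k+t-d), the coefficient of f * s tested at
   position k when f is read with formal degree d.  Three facts about windows
   carry the argument:
   - Massey's degree bound: if f annihilates s^(j-1) but not s^(j), every nonzero
     annihilator g of s^(j) has deg f + deg g >= j;
   - the combination lemma: subtracting suitably shifted and scaled copies of
     the current and of an earlier annihilator, whose discrepancies cancel,
     yields an annihilator of the next prefix of the predicted degree;
   - together they show the new polynomial has degree max(L_j, j+1-L_j), which
     is a lower bound for every annihilator, so it is minimal.
   A strong induction then maintains an invariant (minimality of mu^(j), and
   L_j = j'+1-L_(j')), from which the theorem follows by arithmetic. *)

lemma bm_length:
  "length (fst (bm \<epsilon> s j)) = Suc j \<and> length (fst (snd (bm \<epsilon> s j))) = Suc j
   \<and> length (snd (snd (bm \<epsilon> s j))) = Suc j"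
  by (induction j) (auto simp: Let_def split: prod.splits)

lemma bm_Suc_eq:
  "bm \<epsilon> s (Suc j) = (fst (bm \<epsilon> s j) @ [mu \<epsilon> s (Suc j)],
     fst (snd (bm \<epsilon> s j)) @ [jprime \<epsilon> s (Suc j)], snd (snd (bm \<epsilon> s j)) @ [Dlt \<epsilon> s (Suc j)])"
  using bm_length[of \<epsilon> s j]
  by (auto simp: Let_def mu_def jprime_def Dlt_def nth_append split: prod.splits)

lemma bm_prefix:
  "i \<le> j \<Longrightarrow> fst (bm \<epsilon> s j) ! i = mu \<epsilon> s i \<and> fst (snd (bm \<epsilon> s j)) ! i = jprime \<epsilon> s i
     \<and> snd (snd (bm \<epsilon> s j)) ! i = Dlt \<epsilon> s i"
proof (induction j)
  case 0
  then show ?case by (simp add: mu_def jprime_def Dlt_def)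
next
  case (Suc j)
  show ?case
  proof (cases "i = Suc j")
    case True
    then show ?thesis by (simp add: mu_def jprime_def Dlt_def)
  next
    case False
    then have "i \<le> j" using Suc by simp
    then show ?thesis
      using Suc bm_length[of \<epsilon> s j] unfolding bm_Suc_eq by (simp add: nth_append del: bm.simps)
  qed
qed

lemma mu_0: "mu \<epsilon> s 0 = 1" and jprime_0: "jprime \<epsilon> s 0 = -1" and Dlt_0: "Dlt \<epsilon> s 0 = 1"
  by (simp_all add: mu_def jprime_def Dlt_def)

lemma jprime_bounds: "-1 \<le> jprime \<epsilon> s j \<and> jprime \<epsilon> s j < int j"
proof (induction j)
  case 0
  then show ?case by (simp add: jprime_0)
next
  case (Suc j)
  have "jprime \<epsilon> s (Suc j) = jprime \<epsilon> s j \<or> jprime \<epsilon> s (Suc j) = int j"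
    using bm_length[of \<epsilon> s j] bm_prefix[of j j \<epsilon> s]
    by (auto simp: jprime_def Let_def nth_append split: prod.splits)
  then show ?case using Suc by auto
qed

lemma Dlt_Suc: "Dlt \<epsilon> s (Suc j) = Delta (mu \<epsilon> s j) s (Suc j)"
  using bm_length[of \<epsilon> s j] bm_prefix[of j j \<epsilon> s]
  by (auto simp: Dlt_def Let_def nth_append split: prod.splits)

lemma jprime_Suc:
  "jprime \<epsilon> s (Suc j) = (if Dlt \<epsilon> s (Suc j) = 0 \<or> ee \<epsilon> s j \<le> 0 then jprime \<epsilon> s j else int j)"
  using bm_length[of \<epsilon> s j] bm_prefix[of j j \<epsilon> s]
  by (auto simp: Dlt_Suc jprime_def ee_def Let_def nth_append split: prod.splits)

lemma mu_Suc:
  "mu \<epsilon> s (Suc j) = (if Dlt \<epsilon> s (Suc j) = 0 then mu \<epsilon> s j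
     else smult (Dlt \<epsilon> s (nat (jprime \<epsilon> s j + 1))) (monom 1 (nat (max (ee \<epsilon> s j) 0)) * mu \<epsilon> s j)
        - smult (Dlt \<epsilon> s (Suc j)) (monom 1 (nat (max (- ee \<epsilon> s j) 0)) *
            (if jprime \<epsilon> s j = -1 then [:\<epsilon>:] else mu \<epsilon> s (nat (jprime \<epsilon> s j)))))"
proof -
  have bounds: "-1 \<le> jprime \<epsilon> s j" "jprime \<epsilon> s j < int j" using jprime_bounds[of \<epsilon> s j] by auto
  have "snd (snd (bm \<epsilon> s j)) ! nat (jprime \<epsilon> s j + 1) = Dlt \<epsilon> s (nat (jprime \<epsilon> s j + 1))"
    using bounds bm_prefix[of "nat (jprime \<epsilon> s j + 1)" j \<epsilon> s] by auto
  moreover have "jprime \<epsilon> s j \<noteq> -1 \<Longrightarrow> fst (bm \<epsilon> s j) ! nat (jprime \<epsilon> s j) = mu \<epsilon> s (nat (jprime \<epsilon> s j))"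
    using bounds bm_prefix[of "nat (jprime \<epsilon> s j)" j \<epsilon> s] by auto
  ultimately show ?thesis
    using bm_length[of \<epsilon> s j] bm_prefix[of j j \<epsilon> s]
    by (auto simp: Dlt_Suc mu_def ee_def Let_def nth_append split: prod.splits)
qed

section \<open>Discrepancy windows\<close>

text \<open>The coefficient tested at position k when f is read with formal degree d.\<close>
definition disc :: "'a::comm_ring_1 poly \<Rightarrow> (nat \<Rightarrow> 'a) \<Rightarrow> nat \<Rightarrow> nat \<Rightarrow> 'a" where
  "disc f s d k = (\<Sum>t\<le>d. coeff f t * s (k + t - d))"

lemma lcoeff_eq_disc:
  assumes "degree f + 1 \<le> k" "k \<le> n"
  shows "lcoeff f s n (int (degree f) - int k) = disc f s (degree f) k"
proof -
  let ?d = "degree f"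
  let ?g = "\<lambda>i. (if 0 \<le> (int ?d - int k) + int i then coeff f (nat ((int ?d - int k) + int i)) else 0) * s i"
  have "lcoeff f s n (int ?d - int k) = sum ?g {1..n}" by (simp add: lcoeff_def)
  also have "\<dots> = sum ?g {k - ?d..k}"
  proof (rule sum.mono_neutral_right)
    show "\<forall>i\<in>{1..n} - {k - ?d..k}. ?g i = 0"
    proof
      fix i assume i: "i \<in> {1..n} - {k - ?d..k}"
      show "?g i = 0"
      proof (cases "i < k - ?d")
        case True
        then show ?thesis using assms by auto
      next
        case False
        then have "nat ((int ?d - int k) + int i) > ?d" using i by auto
        then show ?thesis by (simp add: coeff_eq_0)
      qed
    qed
  qed (use assms in auto)
  also have "\<dots> = sum ?g {0 + (k - ?d)..?d + (k - ?d)}" using assms by simp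
  also have "\<dots> = sum (\<lambda>t. ?g (t + (k - ?d))) {0..?d}" by (rule sum.shift_bounds_cl_nat_ivl)
  also have "\<dots> = disc f s ?d k"
    unfolding disc_def atMost_atLeast0[symmetric]
    by (rule sum.cong) (use assms in \<open>auto simp: add.commute\<close>)
  finally show ?thesis .
qed

lemma is_ann_disc:
  "is_ann f s n \<longleftrightarrow> f = 0 \<or> (\<forall>k. degree f + 1 \<le> k \<and> k \<le> n \<longrightarrow> disc f s (degree f) k = 0)"
  unfolding is_ann_def using lcoeff_eq_disc[of f _ n s] by (metis of_nat_add of_nat_1)

lemma Delta_disc: "degree f + 1 \<le> m \<Longrightarrow> Delta f s m = disc f s (degree f) m"
  unfolding Delta_def by (rule lcoeff_eq_disc) auto

lemma is_ann_Suc_imp: "is_ann g s (Suc j) \<Longrightarrow> is_ann g s j"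
  unfolding is_ann_disc by auto

lemma disc_diff: "disc (f - g) s d k = disc f s d k - disc g s d k"
  by (simp add: disc_def algebra_simps sum_subtractf)

lemma disc_smult: "disc (smult c f) s d k = c * disc f s d k"
  by (simp add: disc_def sum_distrib_left algebra_simps)

lemma disc_monom_mult: "disc (monom 1 a * f) s (a + d) k = disc f s d k"
proof -
  let ?h = "\<lambda>t. (if t < a then 0 else coeff f (t - a)) * s (k + t - (a + d))"
  have "disc (monom 1 a * f) s (a + d) k = sum ?h {..a+d}"
    unfolding disc_def by (rule sum.cong) (auto simp: coeff_monom_mult)
  also have "\<dots> = sum ?h {a..a+d}"
    by (rule sum.mono_neutral_right) auto
  also have "\<dots> = sum ?h {0+a..d+a}" by (simp add: add.commute)
  also have "\<dots> = sum (\<lambda>u. ?h (u + a)) {0..d}" by (rule sum.shift_bounds_cl_nat_ivl)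
  also have "\<dots> = disc f s d k"
    unfolding disc_def atMost_atLeast0[symmetric] by (rule sum.cong) auto
  finally show ?thesis .
qed

lemma disc_raise_degree:
  assumes "degree g \<le> d" "d \<le> D" "D + 1 \<le> k"
  shows "disc g s D k = disc g s d (k - (D - d))"
proof -
  have "disc g s D k = (\<Sum>t\<le>d. coeff g t * s (k + t - D))"
    unfolding disc_def by (rule sum.mono_neutral_right) (use assms in \<open>auto simp: coeff_eq_0\<close>)
  also have "\<dots> = disc g s d (k - (D - d))"
    unfolding disc_def by (rule sum.cong) (use assms in auto)
  finally show ?thesis .
qed

section \<open>Massey's degree bound\<close>

text \<open>Proof: the
  double sum of f_a g_b s(j+a+b-d-e) vanishes summed over b first, but summed over a
  first it equals lead_coeff g times the nonzero window of f at j.\<close>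
lemma disc_degree_bound:
  fixes f g :: "'a::idom poly"
  assumes "d + 1 \<le> j" and f_zero: "\<forall>k. d + 1 \<le> k \<and> k < j \<longrightarrow> disc f s d k = 0"
    and f_nonzero: "disc f s d j \<noteq> 0" and "g \<noteq> 0"
    and g_zero: "\<forall>k. degree g + 1 \<le> k \<and> k \<le> j \<longrightarrow> disc g s (degree g) k = 0"
  shows "j \<le> d + degree g"
proof (rule ccontr)
  assume short: "\<not> j \<le> d + degree g"
  define e where "e = degree g"
  define S where "S = (\<Sum>a\<le>d. \<Sum>b\<le>e. coeff f a * coeff g b * s (j + a + b - d - e))"
  have "S = (\<Sum>a\<le>d. coeff f a * disc g s e (j + a - d))"
    unfolding S_def disc_def sum_distrib_left
    by (intro sum.cong refl) (use short in \<open>auto simp: e_def algebra_simps\<close>)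
  also have "\<dots> = 0"
  proof (intro sum.neutral ballI)
    fix a assume "a \<in> {..d}"
    then have "degree g + 1 \<le> j + a - d \<and> j + a - d \<le> j" using short by auto
    then show "coeff f a * disc g s e (j + a - d) = 0" using g_zero by (simp add: e_def)
  qed
  finally have S_zero: "S = 0" .
  have "S = (\<Sum>b\<le>e. coeff g b * disc f s d (j + b - e))"
    unfolding S_def disc_def sum_distrib_left
    by (subst sum.swap) (intro sum.cong refl, use short in \<open>auto simp: e_def algebra_simps\<close>)
  also have "\<dots> = (\<Sum>b<e. coeff g b * disc f s d (j + b - e)) + coeff g e * disc f s d j"
    by (simp flip: lessThan_Suc_atMost)
  also have "(\<Sum>b<e. coeff g b * disc f s d (j + b - e)) = 0"
  proof (intro sum.neutral ballI)
    fix b assume "b \<in> {..<e}"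
    then have "d + 1 \<le> j + b - e \<and> j + b - e < j" using short by (auto simp: e_def)
    then show "coeff g b * disc f s d (j + b - e) = 0" using f_zero by simp
  qed
  finally have "S = coeff g e * disc f s d j" by simp
  moreover have "coeff g e \<noteq> 0" using \<open>g \<noteq> 0\<close> by (simp add: e_def)
  ultimately show False using S_zero f_nonzero by simp
qed

lemma annihilator_degree_lower:
  fixes f g :: "'a::idom poly"
  assumes f: "f \<in> Min_set s j" "degree f \<le> j" and jump: "Delta f s (Suc j) \<noteq> 0"
    and g: "g \<noteq> 0" "is_ann g s (Suc j)"
  shows "degree f \<le> degree g" and "Suc j \<le> degree f + degree g"
proof -
  show "degree f \<le> degree g" using f g is_ann_Suc_imp by (auto simp: Min_set_def)
  have "\<forall>k. degree f + 1 \<le> k \<and> k < Suc j \<longrightarrow> disc f s (degree f) k = 0"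
    using f by (auto simp: Min_set_def is_ann_disc)
  moreover have "disc f s (degree f) (Suc j) \<noteq> 0" using jump f by (simp add: Delta_disc)
  ultimately show "Suc j \<le> degree f + degree g"
    using disc_degree_bound[of "degree f" "Suc j" f s g] f g by (auto simp: is_ann_disc)
qed

section \<open>Combining two annihilators\<close>

lemma degree_diff_eq_left: "degree (q::'a::comm_ring_1 poly) < degree p \<Longrightarrow> degree (p - q) = degree p"
  using degree_add_eq_left[of "-q" p] by simp

lemma degree_monom_1_mult: "(p::'a::idom poly) \<noteq> 0 \<Longrightarrow> degree (monom 1 a * p) = a + degree p"
  by (simp add: degree_mult_eq degree_monom_eq)

lemma annihilator_combination:
  fixes f g :: "'a::idom poly"
  assumes "f \<noteq> 0" "g \<noteq> 0" and "m < j"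
    and f_zero: "\<forall>k. degree f + 1 \<le> k \<and> k \<le> j \<longrightarrow> disc f s (degree f) k = 0"
    and g_zero: "\<forall>k. degree g + 1 \<le> k \<and> k \<le> m \<longrightarrow> disc g s (degree g) k = 0"
    and D: "D = disc f s (degree f) (Suc j)"
    and D': "D' = disc g s (degree g) (Suc m)" "D' \<noteq> 0"
    and align: "a + degree f = b + degree g + (j - m)"
  defines "h \<equiv> smult D' (monom 1 a * f) - smult D (monom 1 b * g)"
  shows "degree h = a + degree f" and "is_ann h s (Suc j)"
proof -
  define N where "N = a + degree f"
  define p where "p = smult D' (monom 1 a * f)"
  define q where "q = smult D (monom 1 b * g)"
  have deg_p: "degree p = N" using \<open>f \<noteq> 0\<close> D' by (simp add: p_def N_def degree_monom_1_mult)
  have deg_q: "degree q \<le> b + degree g"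
    using degree_smult_le[of D "monom 1 b * g"] \<open>g \<noteq> 0\<close> by (simp add: q_def degree_monom_1_mult)
  have gap: "N - (b + degree g) = j - m" "b + degree g < N" using align \<open>m < j\<close> by (auto simp: N_def)
  show deg_h: "degree h = N"
    unfolding h_def p_def[symmetric] q_def[symmetric] using deg_p deg_q gap
    by (subst degree_diff_eq_left) auto
  have window: "disc h s N k = D' * disc f s (degree f) k - D * disc g s (degree g) (k - (j - m))"
    if "N + 1 \<le> k" for k
  proof -
    have "disc q s N k = D * disc (monom 1 b * g) s (b + degree g) (k - (N - (b + degree g)))"
      unfolding q_def disc_smult
      by (subst disc_raise_degree[of _ "b + degree g"]) (use that gap \<open>g \<noteq> 0\<close> in \<open>auto simp: degree_monom_1_mult\<close>)
    then have "disc q s N k = D * disc g s (degree g) (k - (j - m))" using gap by (simp add: disc_monom_mult)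
    moreover have "disc p s N k = D' * disc f s (degree f) k" by (simp add: p_def disc_smult N_def disc_monom_mult)
    ultimately show ?thesis by (simp add: h_def p_def[symmetric] q_def[symmetric] disc_diff)
  qed
  show "is_ann h s (Suc j)"
    unfolding is_ann_disc deg_h
  proof (intro disjI2 allI impI)
    fix k assume k: "N + 1 \<le> k \<and> k \<le> Suc j"
    show "disc h s N k = 0"
    proof (cases "k = Suc j")
      case True
      then have "N + 1 \<le> Suc j" "Suc j - (j - m) = Suc m" using k \<open>m < j\<close> by auto
      then show ?thesis using window[of "Suc j"] True D D' by (simp add: mult.commute)
    next
      case False
      have "degree g + 1 \<le> k - (j - m) \<and> k - (j - m) \<le> m" using k False gap \<open>m < j\<close> by linarith
      then show ?thesis using window[of k] k False f_zero g_zero by (simp add: N_def)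
    qed
  qed
qed

section \<open>The invariant of the construction\<close>

text \<open>The construction indexes by nat (j' + 1); this normalises that conversion.\<close>
lemma nat_of_nat_plus_1: "nat (int k + 1) = Suc k"
  by simp

definition bm_inv :: "'a::idom \<Rightarrow> (nat \<Rightarrow> 'a) \<Rightarrow> nat \<Rightarrow> bool" where
  "bm_inv \<epsilon> s j \<longleftrightarrow> mu \<epsilon> s j \<in> Min_set s j \<and> degree (mu \<epsilon> s j) \<le> j
     \<and> (jprime \<epsilon> s j = -1 \<longrightarrow> degree (mu \<epsilon> s j) = 0)
     \<and> (0 \<le> jprime \<epsilon> s j \<longrightarrow> Dlt \<epsilon> s (nat (jprime \<epsilon> s j + 1)) \<noteq> 0
          \<and> int (degree (mu \<epsilon> s j)) = jprime \<epsilon> s j + 1 - int (degree (mu \<epsilon> s (nat (jprime \<epsilon> s j)))))"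

text \<open>If the discrepancy at step j+1 is nonzero, any annihilator of s^(j+1) whose degree
  is max(e_j, 0) + L_j = max(L_j, j+1-L_j) is minimal.\<close>
lemma minimal_after_jump:
  fixes h :: "'a::idom poly"
  assumes inv: "bm_inv \<epsilon> s j" and jump: "Dlt \<epsilon> s (Suc j) \<noteq> 0"
    and h: "is_ann h s (Suc j)" "int (degree h) = max (ee \<epsilon> s j) 0 + int (degree (mu \<epsilon> s j))"
  shows "h \<in> Min_set s (Suc j)" and "degree h \<le> Suc j"
proof -
  have mu: "mu \<epsilon> s j \<in> Min_set s j" "degree (mu \<epsilon> s j) \<le> j" using inv by (auto simp: bm_inv_def)
  have Delta: "Delta (mu \<epsilon> s j) s (Suc j) \<noteq> 0" using jump by (simp add: Dlt_Suc)
  have "degree h \<le> degree g" if "g \<noteq> 0" "is_ann g s (Suc j)" for g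
    using annihilator_degree_lower[OF mu Delta that] h(2) by (simp add: ee_def)
  moreover have "h \<noteq> 0" using h(2) mu(2) by (auto simp: ee_def)
  ultimately show "h \<in> Min_set s (Suc j)" using h(1) by (auto simp: Min_set_def)
  show "degree h \<le> Suc j" using h(2) mu(2) by (simp add: ee_def)
qed

text \<open>Zero discrepancy: mu^(j) already annihilates s^(j+1) and nothing changes.\<close>
lemma bm_inv_step_zero:
  assumes inv: "bm_inv \<epsilon> s j" and zero: "Dlt \<epsilon> s (Suc j) = 0"
  shows "bm_inv \<epsilon> s (Suc j)"
proof -
  have mu: "mu \<epsilon> s j \<in> Min_set s j" "degree (mu \<epsilon> s j) \<le> j" using inv by (auto simp: bm_inv_def)
  have step: "mu \<epsilon> s (Suc j) = mu \<epsilon> s j" "jprime \<epsilon> s (Suc j) = jprime \<epsilon> s j"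
    using zero by (simp_all add: mu_Suc jprime_Suc)
  have "disc (mu \<epsilon> s j) s (degree (mu \<epsilon> s j)) (Suc j) = 0"
    using zero mu(2) by (simp add: Dlt_Suc Delta_disc)
  then have "is_ann (mu \<epsilon> s j) s (Suc j)"
    using mu(1) by (auto simp: Min_set_def is_ann_disc le_Suc_eq)
  then have "mu \<epsilon> s j \<in> Min_set s (Suc j)"
    using mu(1) is_ann_Suc_imp by (auto simp: Min_set_def)
  then show ?thesis using inv step by (auto simp: bm_inv_def)
qed

text \<open>First jump (j' = -1, so L_j = 0): mu^(j+1) = x^(j+1) mu^(j) - Delta_(j+1) eps has
  degree j+1, which makes the annihilator condition vacuous.\<close>
lemma bm_inv_step_first:
  assumes inv: "bm_inv \<epsilon> s j" and jump: "Dlt \<epsilon> s (Suc j) \<noteq> 0" and first: "jprime \<epsilon> s j = -1"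
  shows "bm_inv \<epsilon> s (Suc j)"
proof -
  have mu: "mu \<epsilon> s j \<noteq> 0" "degree (mu \<epsilon> s j) = 0"
    using inv first by (auto simp: bm_inv_def Min_set_def)
  then have e: "ee \<epsilon> s j = int j + 1" by (simp add: ee_def)
  have step: "mu \<epsilon> s (Suc j) = monom 1 (Suc j) * mu \<epsilon> s j - smult (Dlt \<epsilon> s (Suc j)) [:\<epsilon>:]"
    using jump first e by (simp add: mu_Suc Dlt_0 monom_0 nat_of_nat_plus_1)
  have jp: "jprime \<epsilon> s (Suc j) = int j" using jump e by (simp add: jprime_Suc)
  have deg: "degree (mu \<epsilon> s (Suc j)) = Suc j"
    unfolding step using mu by (subst degree_diff_eq_left) (auto simp: degree_monom_1_mult)
  have "is_ann (mu \<epsilon> s (Suc j)) s (Suc j)" unfolding is_ann_disc deg by auto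
  with minimal_after_jump[OF inv jump] have "mu \<epsilon> s (Suc j) \<in> Min_set s (Suc j)"
    using deg mu e by simp
  then show ?thesis using deg jp jump mu by (simp add: bm_inv_def nat_of_nat_plus_1)
qed

text \<open>General jump (j' = m' \<ge> 0): the update is the combination of mu^(j) with
  mu^(m'), whose degrees satisfy L_j + L_(m') = m' + 1.\<close>
lemma bm_inv_step_general:
  assumes inv: "bm_inv \<epsilon> s j" and inv': "bm_inv \<epsilon> s m'" and jump: "Dlt \<epsilon> s (Suc j) \<noteq> 0"
    and jp: "jprime \<epsilon> s j = int m'"
  shows "bm_inv \<epsilon> s (Suc j)"
proof -
  define e where "e = ee \<epsilon> s j"
  define f where "f = mu \<epsilon> s j"
  define g where "g = mu \<epsilon> s m'"
  have "m' < j" using jprime_bounds[of \<epsilon> s j] jp by simp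
  have f: "f \<in> Min_set s j" "degree f \<le> j" and g: "g \<in> Min_set s m'" "degree g \<le> m'"
    using inv inv' by (auto simp: bm_inv_def f_def g_def)
  have D': "Dlt \<epsilon> s (Suc m') \<noteq> 0" and degrees: "int (degree f) = int m' + 1 - int (degree g)"
    using inv jp by (auto simp: bm_inv_def f_def g_def nat_of_nat_plus_1)
  have e_eq: "e = int j + 1 - 2 * int (degree f)" by (simp add: e_def ee_def f_def)
  have step: "mu \<epsilon> s (Suc j) = smult (Dlt \<epsilon> s (Suc m')) (monom 1 (nat (max e 0)) * f)
                 - smult (Dlt \<epsilon> s (Suc j)) (monom 1 (nat (max (- e) 0)) * g)"
    using jump jp by (simp add: mu_Suc e_def f_def g_def nat_of_nat_plus_1)
  have f_zero: "\<forall>k. degree f + 1 \<le> k \<and> k \<le> j \<longrightarrow> disc f s (degree f) k = 0"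
    and g_zero: "\<forall>k. degree g + 1 \<le> k \<and> k \<le> m' \<longrightarrow> disc g s (degree g) k = 0"
    and nonzero: "f \<noteq> 0" "g \<noteq> 0"
    using f g by (auto simp: Min_set_def is_ann_disc)
  have D_disc: "Dlt \<epsilon> s (Suc j) = disc f s (degree f) (Suc j)"
    and D'_disc: "Dlt \<epsilon> s (Suc m') = disc g s (degree g) (Suc m')"
    using f(2) g(2) by (simp_all add: Dlt_Suc Delta_disc f_def g_def)
  have align: "nat (max e 0) + degree f = nat (max (- e) 0) + degree g + (j - m')"
    using degrees e_eq \<open>m' < j\<close> by (auto simp: max_def)
  have comb: "degree (mu \<epsilon> s (Suc j)) = nat (max e 0) + degree f" "is_ann (mu \<epsilon> s (Suc j)) s (Suc j)"
    unfolding step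
    using annihilator_combination[OF nonzero \<open>m' < j\<close> f_zero g_zero D_disc D'_disc D' align] by auto
  have deg: "int (degree (mu \<epsilon> s (Suc j))) = max e 0 + int (degree f)" using comb(1) by simp
  have min: "mu \<epsilon> s (Suc j) \<in> Min_set s (Suc j)" "degree (mu \<epsilon> s (Suc j)) \<le> Suc j"
    using minimal_after_jump[OF inv jump comb(2)] deg by (simp_all add: e_def f_def)
  show ?thesis
  proof (cases "e \<le> 0")
    case True
    then have "jprime \<epsilon> s (Suc j) = int m'" using jp by (simp add: jprime_Suc e_def)
    then show ?thesis using min deg True D' degrees by (simp add: bm_inv_def g_def nat_of_nat_plus_1)
  next
    case False
    then have "jprime \<epsilon> s (Suc j) = int j" using jump by (simp add: jprime_Suc e_def)
    then show ?thesis using min deg False jump e_eq by (simp add: bm_inv_def nat_of_nat_plus_1 f_def)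
  qed
qed

text \<open>Strong induction, since the general step needs the invariant at j' < j.\<close>
lemma bm_inv_holds: "bm_inv \<epsilon> s j"
proof (induction j rule: less_induct)
  case (less j0)
  show ?case
  proof (cases j0)
    case 0
    then show ?thesis by (simp add: bm_inv_def Min_set_def mu_0 jprime_0 is_ann_def)
  next
    case (Suc j)
    have inv: "bm_inv \<epsilon> s j" using less Suc by simp
    show ?thesis
    proof (cases "Dlt \<epsilon> s (Suc j) = 0")
      case True
      then show ?thesis using bm_inv_step_zero inv Suc by blast
    next
      case jump: False
      show ?thesis
      proof (cases "jprime \<epsilon> s j = -1")
        case True
        then show ?thesis using bm_inv_step_first inv jump Suc by blast
      next
        case False
        then have jp: "jprime \<epsilon> s j = int (nat (jprime \<epsilon> s j))" "nat (jprime \<epsilon> s j) < j0"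
          using jprime_bounds[of \<epsilon> s j] Suc by auto
        then show ?thesis using bm_inv_step_general[OF inv _ jump jp(1)] less Suc by blast
      qed
    qed
  qed
qed

lemma degree_mu_eq_L: "degree (mu (\<epsilon>::'a::idom) s j) = L s j"
proof -
  have "mu \<epsilon> s j \<in> Min_set s j" using bm_inv_holds[of \<epsilon> s j] by (simp add: bm_inv_def)
  then show ?thesis unfolding L_def Min_set_def by (intro Least_equality[symmetric]) auto
qed

text \<open>At a nonzero discrepancy the degree grows by max(e_j, 0), and j' becomes a genuine
  step index.  (If e_j \<le> 0 then j' \<noteq> -1, since L_j = 0 would give e_j = j+1 > 0.)\<close>
lemma jump_step:
  fixes \<epsilon> :: "'a::idom"
  assumes jump: "Dlt \<epsilon> s (Suc j) \<noteq> 0"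
  shows "0 \<le> jprime \<epsilon> s (Suc j)"
    and "int (degree (mu \<epsilon> s (Suc j))) = max (ee \<epsilon> s j) 0 + int (degree (mu \<epsilon> s j))"
proof -
  have inv: "bm_inv \<epsilon> s j" "bm_inv \<epsilon> s (Suc j)" by (rule bm_inv_holds)+
  have "0 \<le> jprime \<epsilon> s (Suc j) \<and>
        int (degree (mu \<epsilon> s (Suc j))) = max (ee \<epsilon> s j) 0 + int (degree (mu \<epsilon> s j))"
  proof (cases "ee \<epsilon> s j \<le> 0")
    case True
    then have jp: "jprime \<epsilon> s (Suc j) = jprime \<epsilon> s j" by (simp add: jprime_Suc)
    have "jprime \<epsilon> s j \<noteq> -1" using inv True by (auto simp: bm_inv_def ee_def)
    then have "0 \<le> jprime \<epsilon> s j" using jprime_bounds[of \<epsilon> s j] by linarith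
    then show ?thesis using inv jp True by (simp add: bm_inv_def)
  next
    case False
    then have "jprime \<epsilon> s (Suc j) = int j" using jump by (simp add: jprime_Suc)
    then show ?thesis using inv False by (simp add: bm_inv_def ee_def)
  qed
  then show "0 \<le> jprime \<epsilon> s (Suc j)"
    and "int (degree (mu \<epsilon> s (Suc j))) = max (ee \<epsilon> s j) 0 + int (degree (mu \<epsilon> s j))" by auto
qed

theorem mainTheorem4:
  fixes \<epsilon> :: "'a::idom" and s :: "nat \<Rightarrow> 'a" and n :: nat
  assumes "1 \<le> n"
  shows "mu \<epsilon> s n \<in> Min_set s n
    \<and> (\<forall>j\<le>n. degree (mu \<epsilon> s j) = L s j)
    \<and> (Dlt \<epsilon> s n = 0 \<longrightarrow>
         L s n = L s (n - 1) \<and> ee \<epsilon> s n = ee \<epsilon> s (n - 1) + 1)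
    \<and> (Dlt \<epsilon> s n \<noteq> 0 \<longrightarrow>
         L s n = degree (mu \<epsilon> s n)
       \<and> int (L s n) = max (ee \<epsilon> s (n - 1)) 0 + int (L s (n - 1))
       \<and> int (L s n) = jprime \<epsilon> s n + 1 - int (L s (nat (jprime \<epsilon> s n)))
       \<and> ee \<epsilon> s n = - \<bar>ee \<epsilon> s (n - 1)\<bar> + 1)"
proof -
  obtain j where n: "n = Suc j" using assms by (cases n) auto
  have min: "mu \<epsilon> s n \<in> Min_set s n" using bm_inv_holds[of \<epsilon> s n] by (simp add: bm_inv_def)
  have L_j: "L s (n - 1) = degree (mu \<epsilon> s j)" and L_n: "L s n = degree (mu \<epsilon> s n)"
    by (simp_all add: n degree_mu_eq_L)
  have zero: "L s n = L s (n - 1) \<and> ee \<epsilon> s n = ee \<epsilon> s (n - 1) + 1" if "Dlt \<epsilon> s n = 0"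
    using that L_j L_n by (simp add: n mu_Suc ee_def)
  have nonzero: "int (L s n) = max (ee \<epsilon> s (n - 1)) 0 + int (L s (n - 1))
      \<and> int (L s n) = jprime \<epsilon> s n + 1 - int (L s (nat (jprime \<epsilon> s n)))
      \<and> ee \<epsilon> s n = - \<bar>ee \<epsilon> s (n - 1)\<bar> + 1" if "Dlt \<epsilon> s n \<noteq> 0"
  proof -
    have jump: "0 \<le> jprime \<epsilon> s n" "int (L s n) = max (ee \<epsilon> s (n - 1)) 0 + int (L s (n - 1))"
      using jump_step[of \<epsilon> s j] that L_j L_n by (simp_all add: n)
    moreover have "int (L s n) = jprime \<epsilon> s n + 1 - int (L s (nat (jprime \<epsilon> s n)))"
      using bm_inv_holds[of \<epsilon> s n] jump(1) by (simp add: bm_inv_def degree_mu_eq_L)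
    moreover have "ee \<epsilon> s n = - \<bar>ee \<epsilon> s (n - 1)\<bar> + 1"
      using jump(2) L_j L_n by (simp add: n ee_def abs_if max_def)
    ultimately show ?thesis by blast
  qed
  have all: "\<forall>j\<le>n. degree (mu \<epsilon> s j) = L s j" by (simp add: degree_mu_eq_L)
  show ?thesis using min all L_n zero nonzero by (intro conjI impI) auto
qed

end
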